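(* For every pure state $|\psi\rangle\in\mathcal{H}'$ and every Z$_2$-invariant measurement $\{\mathcal{E}_\mu\}$ such that for each outcome $\mu$ with $w_\mu:=\mathrm{Tr}\,\mathcal{E}_\mu(|\psi\rangle\langle\psi|)>0$ we have $\mathcal{E}_\mu(|\psi\rangle\langle\psi|)=w_\mu|\phi_\mu\rangle\langle\phi_\mu|$ for a pure state $|\phi_\mu\rangle$, $$\sum_\mu w_\mu\,\mathcal{C}(|\phi_\mu\rangle)\le\mathcal{C}(|\psi\rangle).$$ That is, $\mathcal{C}$ is an ensemble Z$_2$-frameness monotone.
   Context: $\mathcal{H}'$ is a two-dimensional Hilbert space with orthonormal basis $|0\rangle,|1\rangle$; $\pi=|0\rangle\langle0|-|1\rangle\langle1|$. A Z$_2$-invariant operation is a completely positive, trace-nonincreasing linear map $\mathcal{E}$ on operators on $\mathcal{H}'$ with $\mathcal{E}(\pi X\pi)=\pi\mathcal{E}(X)\pi$ for all $X$. A Z$_2$-invariant measurement is a (countable) family $\{\mathcal{E}_\mu\}$ of Z$_2$-invariant operations whose sum is trace-preserving. For a pure state $|\chi\rangle\in\mathcal{H}'$, $\mathcal{C}(|\chi\rangle)=2\min\{|\langle0|\chi\rangle|^2,|\langle1|\chi\rangle|^2\}$. *)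

theory Defs
  imports "HOL-Analysis.Analysis"
begin

type_synonym qvec = "complex ^ 2"
type_synonym qop = "complex ^ 2 ^ 2"

definition ket0 :: qvec where "ket0 = axis 1 1"
definition ket1 :: qvec where "ket1 = axis 2 1"

text \<open>Hermitian inner product, linear in the second argument.\<close>
definition cinner :: "qvec \<Rightarrow> qvec \<Rightarrow> complex" where
  "cinner u v = (\<Sum>k\<in>UNIV. cnj (u $ k) * v $ k)"

definition qtrace :: "qop \<Rightarrow> complex" where
  "qtrace A = (\<Sum>i\<in>UNIV. A $ i $ i)"

definition proj :: "qvec \<Rightarrow> qop" where
  "proj \<phi> = (\<chi> i j. \<phi> $ i * cnj (\<phi> $ j))"

definition cscaleM :: "complex \<Rightarrow> qop \<Rightarrow> qop" where
  "cscaleM c X = (\<chi> i j. c * X $ i $ j)"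

definition parity :: qop where
  "parity = (\<chi> i j. if i = j then (if i = 1 then 1 else -1) else 0)"

definition real_nonneg :: "complex \<Rightarrow> bool" where
  "real_nonneg z \<longleftrightarrow> Im z = 0 \<and> 0 \<le> Re z"

definition psd :: "qop \<Rightarrow> bool" where
  "psd A \<longleftrightarrow> (\<forall>v. real_nonneg (cinner v (A *v v)))"

text \<open>Positive semidefiniteness of an n x n block matrix with 2x2 blocks X i j
  (i.e. an operator on C^n tensor H').\<close>
definition block_psd :: "nat \<Rightarrow> (nat \<Rightarrow> nat \<Rightarrow> qop) \<Rightarrow> bool" where
  "block_psd n X \<longleftrightarrow>
     (\<forall>v :: nat \<Rightarrow> qvec. real_nonneg (\<Sum>i<n. \<Sum>j<n. cinner (v i) (X i j *v v j)))"

definition complex_linear :: "(qop \<Rightarrow> qop) \<Rightarrow> bool" where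
  "complex_linear E \<longleftrightarrow> (\<forall>X Y. E (X + Y) = E X + E Y) \<and> (\<forall>c X. E (cscaleM c X) = cscaleM c (E X))"

text \<open>Complete positivity: id_n tensor E is positive for every ancilla dimension n.\<close>
definition completely_positive :: "(qop \<Rightarrow> qop) \<Rightarrow> bool" where
  "completely_positive E \<longleftrightarrow>
     (\<forall>n X. block_psd n X \<longrightarrow> block_psd n (\<lambda>i j. E (X i j)))"

definition trace_nonincreasing :: "(qop \<Rightarrow> qop) \<Rightarrow> bool" where
  "trace_nonincreasing E \<longleftrightarrow> (\<forall>X. psd X \<longrightarrow> Re (qtrace (E X)) \<le> Re (qtrace X))"

definition Z2_invariant_operation :: "(qop \<Rightarrow> qop) \<Rightarrow> bool" where
  "Z2_invariant_operation E \<longleftrightarrow>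
     complex_linear E \<and> completely_positive E \<and> trace_nonincreasing E \<and>
     (\<forall>X. E (parity ** X ** parity) = parity ** E X ** parity)"

definition Z2_invariant_measurement :: "'i set \<Rightarrow> ('i \<Rightarrow> qop \<Rightarrow> qop) \<Rightarrow> bool" where
  "Z2_invariant_measurement I E \<longleftrightarrow>
     countable I \<and> (\<forall>\<mu>\<in>I. Z2_invariant_operation (E \<mu>)) \<and>
     (\<forall>X. ((\<lambda>\<mu>. qtrace (E \<mu> X)) has_sum qtrace X) I)"

definition frameness :: "qvec \<Rightarrow> real" where
  "frameness x = 2 * min ((cmod (cinner ket0 x))\<^sup>2) ((cmod (cinner ket1 x))\<^sup>2)"

end

theory Submission
  imports Defs
begin

text \<open>Z2 invariance makes a Z2-invariant operation F send the diagonal matrix units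
  |k><k| to diagonal matrices and the off-diagonal units to off-diagonal ones. Hence the
  diagonal of F(|psi><psi|) is p F(|0><0|) + q F(|1><1|) with p = |<0|psi>|^2, q = |<1|psi>|^2,
  while its off-diagonal entry is a combination of F(|0><1|) and F(|1><0|), which complete
  positivity (applied to the Choi matrix) bounds by the diagonal entries of F(|0><0|) and
  F(|1><1|). When the output is w |phi><phi|, the squared off-diagonal entry equals the product
  of the diagonal ones, and an elementary inequality then gives, outcome by outcome,
  w C(phi) \<le> 2 p Tr F(|0><0|) and w C(phi) \<le> 2 q Tr F(|1><1|). Summing over the outcomes,
  trace preservation yields a total of at most 2 min p q = C(psi).\<close>

definition matrix_unit :: "2 \<Rightarrow> 2 \<Rightarrow> qop" where
  "matrix_unit k l = (\<chi> i j. if i = k \<and> j = l then 1 else 0)"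

lemma proj_eq_matrix_units:
  "proj \<psi> = cscaleM (of_real ((cmod (\<psi> $ 1))\<^sup>2)) (matrix_unit 1 1)
     + cscaleM (of_real ((cmod (\<psi> $ 2))\<^sup>2)) (matrix_unit 2 2)
     + cscaleM (\<psi> $ 1 * cnj (\<psi> $ 2)) (matrix_unit 1 2)
     + cscaleM (\<psi> $ 2 * cnj (\<psi> $ 1)) (matrix_unit 2 1)"
  unfolding vec_eq_iff forall_2
  by (simp add: proj_def cscaleM_def matrix_unit_def complex_norm_square del: of_real_power)

lemma parity_conj_entry:
  "(parity ** X ** parity) $ i $ j = (if i = j then X $ i $ j else - X $ i $ j)"
  using exhaust_2[of i] exhaust_2[of j]
  by (auto simp add: matrix_matrix_mult_def sum_2 parity_def)

lemma parity_conj_matrix_unit: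
  "parity ** matrix_unit k l ** parity = cscaleM (if k = l then 1 else -1) (matrix_unit k l)"
  unfolding vec_eq_iff parity_conj_entry by (simp add: cscaleM_def matrix_unit_def)

lemma Z2_invariant_operationD:
  assumes "Z2_invariant_operation E"
  shows "E (X + Y) = E X + E Y" "E (cscaleM c X) = cscaleM c (E X)"
    and "E (parity ** X ** parity) = parity ** E X ** parity"
    and "completely_positive E"
  using assms by (simp_all add: Z2_invariant_operation_def complex_linear_def)

lemma Z2_invariant_operation_even_offdiag:
  assumes "Z2_invariant_operation E" "parity ** X ** parity = X" "i \<noteq> j"
  shows "E X $ i $ j = 0"
proof -
  have "E X = parity ** E X ** parity"
    using Z2_invariant_operationD(3)[OF assms(1), of X] assms(2) by simp
  then show ?thesis
    using assms(3) parity_conj_entry[of "E X" i j] by simp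
qed

lemma Z2_invariant_operation_odd_diag:
  assumes "Z2_invariant_operation E" "parity ** X ** parity = cscaleM (-1) X"
  shows "E X $ i $ i = 0"
proof -
  have "cscaleM (-1) (E X) = parity ** E X ** parity"
    using Z2_invariant_operationD[OF assms(1)] assms(2) by metis
  then have "- E X $ i $ i = E X $ i $ i"
    using parity_conj_entry[of "E X" i i] by (simp add: cscaleM_def vec_eq_iff)
  then show ?thesis by simp
qed

lemma Z2_invariant_operation_proj_diag:
  assumes "Z2_invariant_operation F"
  shows "F (proj \<psi>) $ i $ i = of_real ((cmod (\<psi> $ 1))\<^sup>2) * F (matrix_unit 1 1) $ i $ i
                              + of_real ((cmod (\<psi> $ 2))\<^sup>2) * F (matrix_unit 2 2) $ i $ i"
proof -
  have "F (matrix_unit k l) $ i $ i = 0" if "k \<noteq> l" for k l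
    using Z2_invariant_operation_odd_diag[OF assms] parity_conj_matrix_unit[of k l] that by simp
  then show ?thesis
    unfolding proj_eq_matrix_units Z2_invariant_operationD[OF assms] by (simp add: cscaleM_def)
qed

lemma Z2_invariant_operation_proj_offdiag:
  assumes "Z2_invariant_operation F"
  shows "F (proj \<psi>) $ 1 $ 2 = \<psi> $ 1 * cnj (\<psi> $ 2) * F (matrix_unit 1 2) $ 1 $ 2
                              + \<psi> $ 2 * cnj (\<psi> $ 1) * F (matrix_unit 2 1) $ 1 $ 2"
proof -
  have "F (matrix_unit k k) $ 1 $ 2 = 0" for k
    using Z2_invariant_operation_even_offdiag[OF assms] parity_conj_matrix_unit[of k k]
    by (simp add: cscaleM_def vec_eq_iff)
  then show ?thesis
    unfolding proj_eq_matrix_units Z2_invariant_operationD[OF assms] by (simp add: cscaleM_def)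
qed

text \<open>The Choi matrix \<Sum>i j. |i><j| \<otimes> |i><j| as a 2 x 2 block matrix; block index 0 stands
  for |0> and every other index for |1>.\<close>
definition choi_matrix :: "nat \<Rightarrow> nat \<Rightarrow> qop" where
  "choi_matrix i j = matrix_unit (if i = 0 then 1 else 2) (if j = 0 then 1 else 2)"

lemma real_nonneg_cnj_mult_self: "real_nonneg (cnj z * z)"
  by (simp add: real_nonneg_def)

lemma block_psd_choi_matrix: "block_psd 2 choi_matrix"
  unfolding block_psd_def
proof
  fix v :: "nat \<Rightarrow> qvec"
  have "(\<Sum>i<2. \<Sum>j<2. cinner (v i) (choi_matrix i j *v v j))
        = cnj (v 0 $ 1 + v 1 $ 2) * (v 0 $ 1 + v 1 $ 2)"
    by (simp add: numeral_2_eq_2 lessThan_Suc choi_matrix_def matrix_unit_def cinner_def sum_2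
        matrix_vector_mult_def algebra_simps)
  then show "real_nonneg (\<Sum>i<2. \<Sum>j<2. cinner (v i) (choi_matrix i j *v v j))"
    by (simp only: real_nonneg_cnj_mult_self)
qed

lemma Z2_invariant_operation_choi_form:
  assumes "Z2_invariant_operation F"
  shows "real_nonneg (cnj s * s * F (matrix_unit 1 1) $ k $ k + cnj s * t * F (matrix_unit 1 2) $ k $ l
                    + cnj t * s * F (matrix_unit 2 1) $ l $ k + cnj t * t * F (matrix_unit 2 2) $ l $ l)"
proof -
  define v :: "nat \<Rightarrow> qvec" where "v i = (if i = 0 then axis k s else axis l t)" for i
  have form: "cinner (axis m a) (M *v axis n b) = cnj a * M $ m $ n * b" for m n a b and M :: qop
    using exhaust_2[of m] exhaust_2[of n]
    by (auto simp add: cinner_def matrix_vector_mult_def axis_def sum_2)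
  have "real_nonneg (\<Sum>i<2. \<Sum>j<2. cinner (v i) (F (choi_matrix i j) *v v j))"
    using block_psd_choi_matrix Z2_invariant_operationD(4)[OF assms]
    unfolding completely_positive_def block_psd_def by blast
  moreover have "(\<Sum>i<2. \<Sum>j<2. cinner (v i) (F (choi_matrix i j) *v v j))
      = cnj s * s * F (matrix_unit 1 1) $ k $ k + cnj s * t * F (matrix_unit 1 2) $ k $ l
      + cnj t * s * F (matrix_unit 2 1) $ l $ k + cnj t * t * F (matrix_unit 2 2) $ l $ l"
    by (simp add: v_def numeral_2_eq_2 lessThan_Suc choi_matrix_def form algebra_simps)
  ultimately show ?thesis by simp
qed

lemma le_mult_of_quadratic_nonneg:
  fixes a d N :: real
  assumes "0 \<le> N" "0 \<le> a" "0 \<le> d" and quad: "\<And>l. 0 \<le> a * l\<^sup>2 - 2 * l * N + N * d"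
  shows "N \<le> a * d"
proof (cases "a = 0")
  case False
  then have "a > 0" using \<open>0 \<le> a\<close> by simp
  have "0 \<le> a * (N / a)\<^sup>2 - 2 * (N / a) * N + N * d" by (rule quad)
  also have "\<dots> = N * (d - N / a)" using \<open>a > 0\<close> by (simp add: power2_eq_square field_simps)
  finally have "N = 0 \<or> N / a \<le> d" using \<open>0 \<le> N\<close> by (auto simp: zero_le_mult_iff)
  then show ?thesis using \<open>a > 0\<close> \<open>0 \<le> d\<close> by (auto simp: field_simps)
next
  case True
  then have "N * (d + 2) \<le> 0"
    using quad[of "d + 1"] by (simp add: algebra_simps)
  then show ?thesis using True \<open>0 \<le> d\<close> by (simp add: mult_le_0_iff)
qed

lemma psd_form_2_entries:
  assumes psd: "\<And>s t. real_nonneg (cnj s * s * a + cnj s * t * u + cnj t * s * u' + cnj t * t * d)"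
  shows "Im a = 0 \<and> 0 \<le> Re a \<and> Im d = 0 \<and> 0 \<le> Re d \<and> u' = cnj u \<and> (cmod u)\<^sup>2 \<le> Re a * Re d"
proof -
  have a: "Im a = 0" "0 \<le> Re a" using psd[of 1 0] by (simp_all add: real_nonneg_def)
  have d: "Im d = 0" "0 \<le> Re d" using psd[of 0 1] by (simp_all add: real_nonneg_def)
  have "Im u + Im u' = 0" using psd[of 1 1] a d by (simp add: real_nonneg_def)
  moreover have "Re u - Re u' = 0" using psd[of 1 \<i>] a d by (simp add: real_nonneg_def)
  ultimately have u': "u' = cnj u" by (simp add: complex_eq_iff)
  have "0 \<le> Re a * l\<^sup>2 - 2 * l * (cmod u)\<^sup>2 + (cmod u)\<^sup>2 * Re d" for l
  proof -
    have "cnj (of_real l) * of_real l * a + cnj (of_real l) * - cnj u * u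
          + cnj (- cnj u) * of_real l * u' + cnj (- cnj u) * - cnj u * d
        = of_real (Re a * l\<^sup>2 - 2 * l * (cmod u)\<^sup>2 + (cmod u)\<^sup>2 * Re d)"
    proof -
      have "u * cnj u = of_real ((cmod u)\<^sup>2)" by (metis complex_norm_square of_real_power)
      moreover have "a = of_real (Re a)" "d = of_real (Re d)" using a d by (simp_all add: complex_eq_iff)
      ultimately show ?thesis
        by (simp add: u' algebra_simps power2_eq_square)
    qed
    then show ?thesis using psd[of "of_real l" "- cnj u"] by (simp add: real_nonneg_def)
  qed
  then have "(cmod u)\<^sup>2 \<le> Re a * Re d"
    using le_mult_of_quadratic_nonneg a(2) d(2) by simp
  with a d u' show ?thesis by simp
qed

lemma min_le_of_mult_le_square:
  fixes p q a b c d X Y :: real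
  assumes nonneg: "0 \<le> p" "0 \<le> q" "0 \<le> a" "0 \<le> b" "0 \<le> c" "0 \<le> d" "0 \<le> X" "0 \<le> Y"
    and X: "X\<^sup>2 \<le> a * d" and Y: "Y\<^sup>2 \<le> b * c"
    and prod: "(p * a + q * c) * (p * b + q * d) \<le> p * q * (X + Y)\<^sup>2"
  shows "min (p * a + q * c) (p * b + q * d) \<le> p * (a + b)"
proof (rule ccontr)
  assume "\<not> ?thesis"
  then have "p * b < q * c" "p * a < q * d" by (auto simp: algebra_simps)
  define P where "P = (p * a) * (p * b)"
  define Q where "Q = (q * c) * (q * d)"
  \<comment> \<open>the hypotheses force P + Q \<le> 2 sqrt(P Q), i.e. P = Q, while the negated claim gives P < Q\<close>
  have "P < Q" unfolding P_def Q_def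
    using \<open>p * b < q * c\<close> \<open>p * a < q * d\<close> nonneg
    by (metis mult.commute mult_nonneg_nonneg mult_strict_mono')
  have "P + Q + p * q * (a * d) + p * q * (b * c) \<le> p * q * X\<^sup>2 + p * q * Y\<^sup>2 + 2 * (p * q * X * Y)"
    using prod unfolding P_def Q_def by (simp add: algebra_simps power2_eq_square)
  moreover have "p * q * X\<^sup>2 \<le> p * q * (a * d)" "p * q * Y\<^sup>2 \<le> p * q * (b * c)"
    using X Y nonneg by (simp_all add: mult_left_mono)
  ultimately have sum_le: "P + Q \<le> 2 * (p * q * X * Y)" by linarith
  have "(X * Y)\<^sup>2 \<le> (a * d) * (b * c)"
    using X Y nonneg by (simp add: power_mult_distrib mult_mono)
  then have "(p * q)\<^sup>2 * (X * Y)\<^sup>2 \<le> (p * q)\<^sup>2 * ((a * d) * (b * c))"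
    by (simp add: mult_left_mono)
  moreover have "(p * q * X * Y)\<^sup>2 = (p * q)\<^sup>2 * (X * Y)\<^sup>2" "P * Q = (p * q)\<^sup>2 * ((a * d) * (b * c))"
    unfolding P_def Q_def by (simp_all add: algebra_simps power2_eq_square)
  ultimately have "(p * q * X * Y)\<^sup>2 \<le> P * Q" by simp
  moreover have "(P + Q)\<^sup>2 \<le> 4 * (p * q * X * Y)\<^sup>2"
    using power_mono[OF sum_le, of 2] nonneg unfolding P_def Q_def by (simp add: power_mult_distrib)
  ultimately have "(P - Q)\<^sup>2 \<le> 0" by (simp add: algebra_simps power2_eq_square)
  then show False using \<open>P < Q\<close> by simp
qed

lemma scaled_proj_entries:
  assumes "0 \<le> w" "Y = cscaleM (of_real w) (proj \<phi>)"
  shows "w * frameness \<phi> = 2 * min (Re (Y $ 1 $ 1)) (Re (Y $ 2 $ 2))"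
    and "(cmod (Y $ 1 $ 2))\<^sup>2 = Re (Y $ 1 $ 1) * Re (Y $ 2 $ 2)"
proof -
  have diag: "Re (Y $ i $ i) = w * (cmod (\<phi> $ i))\<^sup>2" for i
    using assms(2) by (simp add: cscaleM_def proj_def complex_mult_cnj cmod_power2 del: of_real_add of_real_power)
  show "w * frameness \<phi> = 2 * min (Re (Y $ 1 $ 1)) (Re (Y $ 2 $ 2))"
    unfolding frameness_def diag using assms(1)
    by (simp add: cinner_def ket0_def ket1_def axis_def sum_2 min_mult_distrib_left)
  show "(cmod (Y $ 1 $ 2))\<^sup>2 = Re (Y $ 1 $ 1) * Re (Y $ 2 $ 2)"
    unfolding diag using assms
    by (simp add: cscaleM_def proj_def norm_mult power_mult_distrib power2_eq_square)
qed

lemma Z2_invariant_operation_outcome_bound: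
  assumes F: "Z2_invariant_operation F" and w: "w = Re (qtrace (F (proj \<psi>)))"
    and pure: "w > 0 \<Longrightarrow> F (proj \<psi>) = cscaleM (of_real w) (proj \<phi>)"
  shows "0 \<le> w * frameness \<phi>"
    and "w * frameness \<phi> \<le> 2 * (cmod (\<psi> $ 1))\<^sup>2 * Re (qtrace (F (matrix_unit 1 1)))"
    and "w * frameness \<phi> \<le> 2 * (cmod (\<psi> $ 2))\<^sup>2 * Re (qtrace (F (matrix_unit 2 2)))"
proof -
  define p q where "p = (cmod (\<psi> $ 1))\<^sup>2" and "q = (cmod (\<psi> $ 2))\<^sup>2"
  define a b c d where "a = Re (F (matrix_unit 1 1) $ 1 $ 1)" and "b = Re (F (matrix_unit 1 1) $ 2 $ 2)"
    and "c = Re (F (matrix_unit 2 2) $ 1 $ 1)" and "d = Re (F (matrix_unit 2 2) $ 2 $ 2)"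
  define X Y where "X = cmod (F (matrix_unit 1 2) $ 1 $ 2)" and "Y = cmod (F (matrix_unit 2 1) $ 1 $ 2)"
  define A B where "A = p * a + q * c" and "B = p * b + q * d"
  have choi12: "0 \<le> a" "0 \<le> d" "X\<^sup>2 \<le> a * d"
    using psd_form_2_entries[OF Z2_invariant_operation_choi_form[OF F, where k = 1 and l = 2]]
    unfolding a_def d_def X_def by simp_all
  have choi21: "0 \<le> b" "0 \<le> c" "Y\<^sup>2 \<le> b * c"
    using psd_form_2_entries[OF Z2_invariant_operation_choi_form[OF F, where k = 2 and l = 1]]
    unfolding b_def c_def Y_def by simp_all
  have nonneg: "0 \<le> p" "0 \<le> q" "0 \<le> X" "0 \<le> Y" "0 \<le> A" "0 \<le> B"
    using choi12 choi21 unfolding p_def q_def X_def Y_def A_def B_def by simp_all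
  have diag: "Re (F (proj \<psi>) $ 1 $ 1) = A" "Re (F (proj \<psi>) $ 2 $ 2) = B"
    unfolding A_def B_def a_def b_def c_def d_def p_def q_def
    by (simp_all add: Z2_invariant_operation_proj_diag[OF F] del: of_real_power)
  have "w = A + B" unfolding w diag[symmetric] by (simp add: qtrace_def sum_2)
  have outcome: "w * frameness \<phi> = 2 * min A B \<and> A * B \<le> p * q * (X + Y)\<^sup>2"
  proof (cases "w = 0")
    case True
    then show ?thesis using \<open>w = A + B\<close> nonneg by (simp add: add_nonneg_eq_0_iff)
  next
    case False
    then have proj: "F (proj \<psi>) = cscaleM (of_real w) (proj \<phi>)"
      using pure nonneg \<open>w = A + B\<close> by simp
    have "cmod (F (proj \<psi>) $ 1 $ 2) \<le> sqrt p * sqrt q * (X + Y)"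
      unfolding Z2_invariant_operation_proj_offdiag[OF F] p_def q_def X_def Y_def
      using norm_triangle_ineq[of "\<psi> $ 1 * cnj (\<psi> $ 2) * F (matrix_unit 1 2) $ 1 $ 2"
          "\<psi> $ 2 * cnj (\<psi> $ 1) * F (matrix_unit 2 1) $ 1 $ 2"]
      by (simp add: norm_mult algebra_simps)
    then have "(cmod (F (proj \<psi>) $ 1 $ 2))\<^sup>2 \<le> p * q * (X + Y)\<^sup>2"
      using power_mono[of _ _ 2] nonneg by (fastforce simp: power_mult_distrib)
    then show ?thesis
      using scaled_proj_entries[OF _ proj] nonneg \<open>w = A + B\<close> diag by simp
  qed
  then have prod: "(p * a + q * c) * (p * b + q * d) \<le> p * q * (X + Y)\<^sup>2"
    unfolding A_def B_def by simp
  have "min A B \<le> p * (a + b)"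
    using min_le_of_mult_le_square[of p q a b c d X Y] nonneg choi12 choi21 prod
    unfolding A_def B_def by simp
  moreover have "min A B \<le> q * (c + d)"
    using min_le_of_mult_le_square[of q p c d a b Y X] nonneg choi12 choi21 prod
    unfolding A_def B_def by (simp add: algebra_simps min.commute)
  moreover have "Re (qtrace (F (matrix_unit 1 1))) = a + b" "Re (qtrace (F (matrix_unit 2 2))) = c + d"
    unfolding a_def b_def c_def d_def by (simp_all add: qtrace_def sum_2)
  ultimately show "0 \<le> w * frameness \<phi>"
    and "w * frameness \<phi> \<le> 2 * (cmod (\<psi> $ 1))\<^sup>2 * Re (qtrace (F (matrix_unit 1 1)))"
    and "w * frameness \<phi> \<le> 2 * (cmod (\<psi> $ 2))\<^sup>2 * Re (qtrace (F (matrix_unit 2 2)))"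
    using outcome nonneg unfolding p_def[symmetric] q_def[symmetric] by simp_all
qed

lemma summable_on_infsum_le_of_dominated:
  fixes f g :: "'a \<Rightarrow> real"
  assumes "(f has_sum s) I" and "\<And>x. x \<in> I \<Longrightarrow> 0 \<le> g x" and "\<And>x. x \<in> I \<Longrightarrow> g x \<le> f x"
  shows "g summable_on I" and "infsum g I \<le> s"
proof -
  have "f summable_on I" using assms(1) by (rule has_sum_imp_summable)
  then show "g summable_on I"
    using assms(3,2) by (rule summable_on_comparison_test)
  then have "infsum g I \<le> infsum f I"
    using \<open>f summable_on I\<close> assms(3) by (rule infsum_mono)
  also have "\<dots> = s" using assms(1) by (rule infsumI)
  finally show "infsum g I \<le> s" .
qed

lemma Z2_invariant_measurement_trace_matrix_unit:
  assumes "Z2_invariant_measurement I E"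
  shows "((\<lambda>\<mu>. Re (qtrace (E \<mu> (matrix_unit k k)))) has_sum 1) I"
proof -
  have "qtrace (matrix_unit k k) = 1"
    using exhaust_2[of k] by (auto simp: qtrace_def sum_2 matrix_unit_def)
  then have "((\<lambda>\<mu>. qtrace (E \<mu> (matrix_unit k k))) has_sum 1) I"
    using assms unfolding Z2_invariant_measurement_def by metis
  then show ?thesis using has_sum_Re by fastforce
qed

theorem lemma11:
  fixes \<psi> :: qvec and I :: "'i set" and E :: "'i \<Rightarrow> qop \<Rightarrow> qop"
    and \<phi> :: "'i \<Rightarrow> qvec" and w :: "'i \<Rightarrow> real"
  assumes "norm \<psi> = 1"
    and "Z2_invariant_measurement I E"
    and "\<And>\<mu>. w \<mu> = Re (qtrace (E \<mu> (proj \<psi>)))"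
    and "\<And>\<mu>. \<mu> \<in> I \<Longrightarrow> w \<mu> > 0 \<Longrightarrow>
           norm (\<phi> \<mu>) = 1 \<and> E \<mu> (proj \<psi>) = cscaleM (complex_of_real (w \<mu>)) (proj (\<phi> \<mu>))"
  shows "(\<lambda>\<mu>. w \<mu> * frameness (\<phi> \<mu>)) summable_on I \<and>
         (\<Sum>\<^sub>\<infinity>\<mu>\<in>I. w \<mu> * frameness (\<phi> \<mu>)) \<le> frameness \<psi>"
proof -
  have ops: "Z2_invariant_operation (E \<mu>)" if "\<mu> \<in> I" for \<mu>
    using assms(2) that by (simp add: Z2_invariant_measurement_def)
  have pure: "E \<mu> (proj \<psi>) = cscaleM (of_real (w \<mu>)) (proj (\<phi> \<mu>))" if "\<mu> \<in> I" "w \<mu> > 0" for \<mu>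
    using assms(4) that by simp
  note bound = Z2_invariant_operation_outcome_bound[OF ops assms(3) pure]
  have traces: "((\<lambda>\<mu>. 2 * (cmod (\<psi> $ k))\<^sup>2 * Re (qtrace (E \<mu> (matrix_unit k k)))) has_sum 2 * (cmod (\<psi> $ k))\<^sup>2) I"
    for k
    using has_sum_cmult_right[OF Z2_invariant_measurement_trace_matrix_unit[OF assms(2)]] by simp
  have "(\<lambda>\<mu>. w \<mu> * frameness (\<phi> \<mu>)) summable_on I"
    and "(\<Sum>\<^sub>\<infinity>\<mu>\<in>I. w \<mu> * frameness (\<phi> \<mu>)) \<le> 2 * (cmod (\<psi> $ 1))\<^sup>2"
    and "(\<Sum>\<^sub>\<infinity>\<mu>\<in>I. w \<mu> * frameness (\<phi> \<mu>)) \<le> 2 * (cmod (\<psi> $ 2))\<^sup>2"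
    using summable_on_infsum_le_of_dominated[OF traces[of 1] bound(1) bound(2)]
      summable_on_infsum_le_of_dominated[OF traces[of 2] bound(1) bound(3)] by simp_all
  moreover have "frameness \<psi> = 2 * min ((cmod (\<psi> $ 1))\<^sup>2) ((cmod (\<psi> $ 2))\<^sup>2)"
    by (simp add: frameness_def cinner_def ket0_def ket1_def axis_def sum_2)
  ultimately show ?thesis by simp
qed

end
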